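(* If $\Gamma\vdash_r M:\delta\mid\Delta$ (derivable in the restricted type system) for some restricted basis $\Gamma$, restricted name context $\Delta$ and $\delta\in\Lambda^r_D$, then $M$ is strongly normalising.
   Context: $\lambda\mu$ terms and commands: $M::=x\mid\lambda x.M\mid MN\mid\mu\alpha.\mathsf C$ and $\mathsf C::=[\alpha]M$. Structural substitution $T[\alpha\Leftarrow L]$ replaces, recursively, every subterm $[\alpha]N$ by $[\alpha](N[\alpha\Leftarrow L])L$. $M$ is strongly normalising if there is no infinite reduction sequence from $M$ for the compatible closure of $(\lambda x.M)N\to M[N/x]$ and $(\mu\alpha.\mathsf C)N\to\mu\alpha.\mathsf C[\alpha\Leftarrow N]$. (The paper notes that adding the renaming rule $[\alpha]\mu\beta.\mathsf C\to\mathsf C[\alpha/\beta]$ does not change this set.) Full type system. $R=\{\bot\sqsubset\top\}$ and $\psi=\psi_\top$. - $\Lambda_R$: $\rho::=\psi_a\mid\omega\mid\rho\wedge\rho$; - $\Lambda_D$: $\delta::=\rho\mid\kappa\to\rho\mid\omega\mid\delta\wedge\delta$; - $\Lambda_C$: $\kappa::=\delta\times\kappa\mid\omega\mid\kappa\wedge\kappa$. The relations $\le_R,\le_D,\le_C$ are the least reflexive, transitive relations with $\sigma\wedge\tau\le\sigma,\tau$, $\sigma\le\omega$, $\rho\le\sigma,\tau\Rightarrow\rho\le\sigma\wedge\tau$, and additionally: - $\psi_\bot\sim\omega$ and $\psi_{a\sqcup b}\sim\psi_a\wedge\psi_b$; - $\le_R\subseteq\le_D$; - $\omega\le_D\omega\to\omega$;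 - $\psi_a\le_D\omega\to\psi_a\le_D\psi_a$; - $\omega\le_C\omega\times\omega$; - $(\kappa\to\rho_1)\wedge(\kappa\to\rho_2)\le_D\kappa\to(\rho_1\wedge\rho_2)$; - $(\delta_1\times\kappa_1)\wedge(\delta_2\times\kappa_2)\le_C(\delta_1\wedge\delta_2)\times(\kappa_1\wedge\kappa_2)$; - $\to$ is contravariant in $\Lambda_C$ and covariant in $\Lambda_R$; - $\times$ is covariant in both arguments. Assignment rules, with bases $\Gamma$ (finite maps variables $\to\Lambda_D$), contexts $\Delta$ (finite maps names $\to\Lambda_C$), and $\Gamma(x)$, $\Delta(\alpha)$ equal to $\omega$ outside the domain: - (Ax) $\Gamma,x{:}\delta\vdash x:\delta\mid\Delta$. - (Abs) From $\Gamma\vdash M:\kappa\to\rho\mid\Delta$, $\Gamma(x)=\delta$, infer $\Gamma\setminus x\vdash\lambda x.M:(\delta\times\kappa)\to\rho\mid\Delta$. - (App) From $\Gamma\vdash M:(\delta\times\kappa)\to\rho\mid\Delta$ and $\Gamma\vdash N:\delta\mid\Delta$, infer $\Gamma\vdash MN:\kappa\to\rho\mid\Delta$. - (Cmd) From $\Gamma\vdash M:\delta\mid\Delta$, $\Delta(\alpha)=\kappa$, infer $\Gamma\vdash[\alpha]M:\delta\times\kappa\mid\Delta$. - ($\mu$) From $\Gamma\vdash\mathsf C:(\kappa'\to\rho)\times\kappa'\mid\Delta$, $\Delta(\alpha)=\kappa$, infer $\Gamma\vdash\mu\alpha.\mathsf C:\kappa\to\rho\mid\Delta\setminus\alpha$.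 - ($\wedge$), ($\omega$) ($T:\omega$), and ($\le$) subsumption. Restricted system. Restricted types: $\Lambda^r_D$: $\delta::=\kappa\to\psi\mid\delta\wedge\delta$; $\Lambda^r_C$: $\kappa::=\omega\mid\delta\times\kappa\mid\kappa\wedge\kappa$. A restricted basis (resp. context) assigns only types in $\Lambda^r_D$ (resp. $\Lambda^r_C$). A judgement is restricted if its basis and context are restricted and its predicate is in $\Lambda^r_D\cup\Lambda^r_C$. $\Gamma\vdash_r T:\sigma\mid\Delta$ means the judgement is derivable with the rules above, without rule ($\omega$), and with every judgement in the derivation restricted. *)

theory Defs
  imports Main
begin

text \<open>Variables and names are two separate de Bruijn index spaces.
  Lam binds variable 0, Mu binds name 0.  Named a M is the command [a]M.\<close>

datatype trm = Var nat | Lam trm | App trm trm | Mu cmd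
     and cmd = Named nat trm

primrec liftV :: "nat \<Rightarrow> trm \<Rightarrow> trm" and liftVc :: "nat \<Rightarrow> cmd \<Rightarrow> cmd" where
  "liftV k (Var i) = (if i < k then Var i else Var (Suc i))"
| "liftV k (Lam M) = Lam (liftV (Suc k) M)"
| "liftV k (App M N) = App (liftV k M) (liftV k N)"
| "liftV k (Mu C) = Mu (liftVc k C)"
| "liftVc k (Named a M) = Named a (liftV k M)"

primrec liftN :: "nat \<Rightarrow> trm \<Rightarrow> trm" and liftNc :: "nat \<Rightarrow> cmd \<Rightarrow> cmd" where
  "liftN k (Var i) = Var i"
| "liftN k (Lam M) = Lam (liftN k M)"
| "liftN k (App M N) = App (liftN k M) (liftN k N)"
| "liftN k (Mu C) = Mu (liftNc (Suc k) C)"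
| "liftNc k (Named a M) = Named (if a < k then a else Suc a) (liftN k M)"

primrec substV :: "trm \<Rightarrow> nat \<Rightarrow> trm \<Rightarrow> trm" and substVc :: "cmd \<Rightarrow> nat \<Rightarrow> trm \<Rightarrow> cmd" where
  "substV (Var i) k N = (if i < k then Var i else if i = k then N else Var (i - 1))"
| "substV (Lam M) k N = Lam (substV M (Suc k) (liftV 0 N))"
| "substV (App M M') k N = App (substV M k N) (substV M' k N)"
| "substV (Mu C) k N = Mu (substVc C k (liftN 0 N))"
| "substVc (Named a M) k N = Named a (substV M k N)"

text \<open>Structural substitution T[k <= L]: every [k]N becomes [k](N[k <= L]) L.\<close>
primrec sstruct :: "trm \<Rightarrow> nat \<Rightarrow> trm \<Rightarrow> trm" and sstructc :: "cmd \<Rightarrow> nat \<Rightarrow> trm \<Rightarrow> cmd" where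
  "sstruct (Var i) k L = Var i"
| "sstruct (Lam M) k L = Lam (sstruct M k (liftV 0 L))"
| "sstruct (App M N) k L = App (sstruct M k L) (sstruct N k L)"
| "sstruct (Mu C) k L = Mu (sstructc C (Suc k) (liftN 0 L))"
| "sstructc (Named a M) k L =
     (if a = k then Named a (App (sstruct M k L) L) else Named a (sstruct M k L))"

inductive red :: "trm \<Rightarrow> trm \<Rightarrow> bool" and redc :: "cmd \<Rightarrow> cmd \<Rightarrow> bool" where
  beta: "red (App (Lam M) N) (substV M 0 N)"
| mu:   "red (App (Mu C) N) (Mu (sstructc C 0 (liftN 0 N)))"
| lam:  "red M M' \<Longrightarrow> red (Lam M) (Lam M')"
| appL: "red M M' \<Longrightarrow> red (App M N) (App M' N)"
| appR: "red N N' \<Longrightarrow> red (App M N) (App M N')"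
| muC:  "redc C C' \<Longrightarrow> red (Mu C) (Mu C')"
| named: "red M M' \<Longrightarrow> redc (Named a M) (Named a M')"

definition SN :: "trm \<Rightarrow> bool" where
  "SN M \<longleftrightarrow> \<not> (\<exists>f. f 0 = M \<and> (\<forall>i. red (f i) (f (Suc i))))"

datatype lev = Bot | Top

fun lsup :: "lev \<Rightarrow> lev \<Rightarrow> lev" where
  "lsup Bot b = b"
| "lsup Top b = Top"

text \<open>One syntax for all three sorts; Arr k r is k \<rightarrow> r, Prod d k is d \<times> k.\<close>
datatype ty = Psi lev | Om | Meet ty ty | Arr ty ty | Prod ty ty

inductive inR :: "ty \<Rightarrow> bool" where
  "inR (Psi a)" | "inR Om" | "inR a \<Longrightarrow> inR b \<Longrightarrow> inR (Meet a b)"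

inductive inD :: "ty \<Rightarrow> bool" and inC :: "ty \<Rightarrow> bool" where
  "inR r \<Longrightarrow> inD r"
| "inC k \<Longrightarrow> inR r \<Longrightarrow> inD (Arr k r)"
| "inD Om"
| "inD a \<Longrightarrow> inD b \<Longrightarrow> inD (Meet a b)"
| "inD d \<Longrightarrow> inC k \<Longrightarrow> inC (Prod d k)"
| "inC Om"
| "inC a \<Longrightarrow> inC b \<Longrightarrow> inC (Meet a b)"

inductive leqR :: "ty \<Rightarrow> ty \<Rightarrow> bool" where
  R_refl: "inR a \<Longrightarrow> leqR a a"
| R_trans: "leqR a b \<Longrightarrow> leqR b c \<Longrightarrow> leqR a c"
| R_meetL: "inR a \<Longrightarrow> inR b \<Longrightarrow> leqR (Meet a b) a"
| R_meetR: "inR a \<Longrightarrow> inR b \<Longrightarrow> leqR (Meet a b) b"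
| R_top: "inR a \<Longrightarrow> leqR a Om"
| R_glb: "leqR r a \<Longrightarrow> leqR r b \<Longrightarrow> leqR r (Meet a b)"
| R_bot1: "leqR (Psi Bot) Om"
| R_bot2: "leqR Om (Psi Bot)"
| R_join1: "leqR (Psi (lsup a b)) (Meet (Psi a) (Psi b))"
| R_join2: "leqR (Meet (Psi a) (Psi b)) (Psi (lsup a b))"

inductive leqD :: "ty \<Rightarrow> ty \<Rightarrow> bool" and leqC :: "ty \<Rightarrow> ty \<Rightarrow> bool" where
  D_refl: "inD a \<Longrightarrow> leqD a a"
| D_trans: "leqD a b \<Longrightarrow> leqD b c \<Longrightarrow> leqD a c"
| D_meetL: "inD a \<Longrightarrow> inD b \<Longrightarrow> leqD (Meet a b) a"
| D_meetR: "inD a \<Longrightarrow> inD b \<Longrightarrow> leqD (Meet a b) b"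
| D_top: "inD a \<Longrightarrow> leqD a Om"
| D_glb: "leqD r a \<Longrightarrow> leqD r b \<Longrightarrow> leqD r (Meet a b)"
| D_R: "leqR a b \<Longrightarrow> leqD a b"
| D_om: "leqD Om (Arr Om Om)"
| D_psi1: "leqD (Psi a) (Arr Om (Psi a))"
| D_psi2: "leqD (Arr Om (Psi a)) (Psi a)"
| D_arrmeet: "inC k \<Longrightarrow> inR r1 \<Longrightarrow> inR r2 \<Longrightarrow>
     leqD (Meet (Arr k r1) (Arr k r2)) (Arr k (Meet r1 r2))"
| D_arr: "leqC k' k \<Longrightarrow> leqR r r' \<Longrightarrow> leqD (Arr k r) (Arr k' r')"
| C_refl: "inC a \<Longrightarrow> leqC a a"
| C_trans: "leqC a b \<Longrightarrow> leqC b c \<Longrightarrow> leqC a c"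
| C_meetL: "inC a \<Longrightarrow> inC b \<Longrightarrow> leqC (Meet a b) a"
| C_meetR: "inC a \<Longrightarrow> inC b \<Longrightarrow> leqC (Meet a b) b"
| C_top: "inC a \<Longrightarrow> leqC a Om"
| C_glb: "leqC r a \<Longrightarrow> leqC r b \<Longrightarrow> leqC r (Meet a b)"
| C_om: "leqC Om (Prod Om Om)"
| C_prodmeet: "inD d1 \<Longrightarrow> inD d2 \<Longrightarrow> inC k1 \<Longrightarrow> inC k2 \<Longrightarrow>
     leqC (Meet (Prod d1 k1) (Prod d2 k2)) (Prod (Meet d1 d2) (Meet k1 k2))"
| C_prod: "leqD d d' \<Longrightarrow> leqC k k' \<Longrightarrow> leqC (Prod d k) (Prod d' k')"

text \<open>Restricted types (psi = Psi Top).\<close>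
inductive rD :: "ty \<Rightarrow> bool" and rC :: "ty \<Rightarrow> bool" where
  "rC k \<Longrightarrow> rD (Arr k (Psi Top))"
| "rD a \<Longrightarrow> rD b \<Longrightarrow> rD (Meet a b)"
| "rC Om"
| "rD d \<Longrightarrow> rC k \<Longrightarrow> rC (Prod d k)"
| "rC a \<Longrightarrow> rC b \<Longrightarrow> rC (Meet a b)"

type_synonym env = "nat \<Rightarrow> ty option"

definition look :: "env \<Rightarrow> nat \<Rightarrow> ty" where
  "look E i = (case E i of None \<Rightarrow> Om | Some t \<Rightarrow> t)"

text \<open>Removing the binder at index 0 (Gamma without x, Delta without alpha).\<close>
definition dropE :: "env \<Rightarrow> env" where
  "dropE E = (\<lambda>i. E (Suc i))"

definition rbasis :: "env \<Rightarrow> bool" where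
  "rbasis G \<longleftrightarrow> finite (dom G) \<and> (\<forall>t\<in>ran G. rD t)"

definition rctxt :: "env \<Rightarrow> bool" where
  "rctxt D \<longleftrightarrow> finite (dom D) \<and> (\<forall>t\<in>ran D. rC t)"

definition rjudg :: "env \<Rightarrow> env \<Rightarrow> ty \<Rightarrow> bool" where
  "rjudg G D s \<longleftrightarrow> rbasis G \<and> rctxt D \<and> (rD s \<or> rC s)"

text \<open>rtyp G M s D : the judgement G |- M : s | D is derivable with all rules except (omega),
  every judgement in the derivation being restricted (checked at each rule's conclusion).\<close>
inductive rtyp :: "env \<Rightarrow> trm \<Rightarrow> ty \<Rightarrow> env \<Rightarrow> bool"
  and rtypc :: "env \<Rightarrow> cmd \<Rightarrow> ty \<Rightarrow> env \<Rightarrow> bool" where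
  Ax: "G x = Some d \<Longrightarrow> rjudg G D d \<Longrightarrow> rtyp G (Var x) d D"
| Abs: "rtyp G M (Arr k r) D \<Longrightarrow> rjudg (dropE G) D (Arr (Prod (look G 0) k) r) \<Longrightarrow>
     rtyp (dropE G) (Lam M) (Arr (Prod (look G 0) k) r) D"
| App: "rtyp G M (Arr (Prod d k) r) D \<Longrightarrow> rtyp G N d D \<Longrightarrow> rjudg G D (Arr k r) \<Longrightarrow>
     rtyp G (App M N) (Arr k r) D"
| Cmd: "rtyp G M d D \<Longrightarrow> rjudg G D (Prod d (look D a)) \<Longrightarrow>
     rtypc G (Named a M) (Prod d (look D a)) D"
| MuR: "rtypc G C (Prod (Arr k' r) k') D \<Longrightarrow> rjudg G (dropE D) (Arr (look D 0) r) \<Longrightarrow>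
     rtyp G (Mu C) (Arr (look D 0) r) (dropE D)"
| MeetT: "rtyp G M s D \<Longrightarrow> rtyp G M t D \<Longrightarrow> rjudg G D (Meet s t) \<Longrightarrow> rtyp G M (Meet s t) D"
| MeetC: "rtypc G C s D \<Longrightarrow> rtypc G C t D \<Longrightarrow> rjudg G D (Meet s t) \<Longrightarrow> rtypc G C (Meet s t) D"
| SubT: "rtyp G M s D \<Longrightarrow> leqD s t \<Longrightarrow> rjudg G D t \<Longrightarrow> rtyp G M t D"
| SubC: "rtypc G C s D \<Longrightarrow> leqC s t \<Longrightarrow> rjudg G D t \<Longrightarrow> rtypc G C t D"

end

theory Submission
  imports Defs
begin

text \<open>The proof is a realizability argument. Each type is read as a set of terms and each
  continuation type as a set of argument stacks; the base type \<open>\<psi>\<close> is read as the terms that stay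
  strongly normalising whatever strongly normalising stack they are applied to, after any renaming
  of their names. Subtyping is sound for this reading, and every typing rule is sound for it once
  variables are substituted by realizers of their types and every command \<open>[\<alpha>]N\<close> is sent to
  \<open>[\<alpha>](N S\<^sub>\<alpha>)\<close> for a realizing stack \<open>S\<^sub>\<alpha>\<close> of the type of \<open>\<alpha>\<close>. The two key cases, \<open>\<lambda>\<close> and \<open>\<mu>\<close>,
  rest on the fact that strong normalisation is closed under head expansion of \<open>\<beta>\<close>- and
  \<open>\<mu>\<close>-redexes. Restricted types are never trivial: their realizers are strongly normalising,
  and their interpretations contain all variables (resp. all long enough stacks of variables), so
  the identity substitution is admissible and the typed term itself is strongly normalising.\<close>

section \<open>Parallel substitution\<close>

primrec apps :: "trm \<Rightarrow> trm list \<Rightarrow> trm" where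
  "apps M [] = M"
| "apps M (N # S) = apps (App M N) S"

lemma apps_append[simp]: "apps M (S @ S') = apps (apps M S) S'"
  by (induction S arbitrary: M) auto

definition up_var :: "(nat \<Rightarrow> trm) \<Rightarrow> nat \<Rightarrow> trm" where
  "up_var s i = (case i of 0 \<Rightarrow> Var 0 | Suc j \<Rightarrow> liftV 0 (s j))"

definition up_name :: "(nat \<Rightarrow> nat) \<Rightarrow> nat \<Rightarrow> nat" where
  "up_name z a = (case a of 0 \<Rightarrow> 0 | Suc b \<Rightarrow> Suc (z b))"

definition up_args :: "(nat \<Rightarrow> trm list) \<Rightarrow> nat \<Rightarrow> trm list" where
  "up_args t a = (case a of 0 \<Rightarrow> [] | Suc b \<Rightarrow> map (liftN 0) (t b))"

text \<open>\<open>psubst M s z t\<close> substitutes \<open>s i\<close> for variable \<open>i\<close>, renames name \<open>a\<close> to \<open>z a\<close>, and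
  replaces every command \<open>[a]N\<close> by \<open>[z a](N\<sigma>) (t a)\<close>: the list \<open>t a\<close> is the argument stack
  appended to the commands on \<open>a\<close>, so structural substitution is the case of a one-element stack.\<close>

primrec psubst :: "trm \<Rightarrow> (nat \<Rightarrow> trm) \<Rightarrow> (nat \<Rightarrow> nat) \<Rightarrow> (nat \<Rightarrow> trm list) \<Rightarrow> trm"
  and psubstc :: "cmd \<Rightarrow> (nat \<Rightarrow> trm) \<Rightarrow> (nat \<Rightarrow> nat) \<Rightarrow> (nat \<Rightarrow> trm list) \<Rightarrow> cmd" where
  "psubst (Var i) s z t = s i"
| "psubst (Lam M) s z t = Lam (psubst M (up_var s) z (\<lambda>a. map (liftV 0) (t a)))"
| "psubst (App M N) s z t = App (psubst M s z t) (psubst N s z t)"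
| "psubst (Mu C) s z t = Mu (psubstc C (\<lambda>i. liftN 0 (s i)) (up_name z) (up_args t))"
| "psubstc (Named a M) s z t = Named (z a) (apps (psubst M s z t) (t a))"

lemma up_var_Var[simp]: "up_var Var = Var"
  by (rule ext) (simp add: up_var_def split: nat.split)

lemma up_var_Var_rename: "up_var (\<lambda>i. Var (f i)) = (\<lambda>i. Var (case i of 0 \<Rightarrow> 0 | Suc j \<Rightarrow> Suc (f j)))"
  by (rule ext) (simp add: up_var_def split: nat.split)

lemma up_name_id[simp]: "up_name id = id" "up_name (\<lambda>x. x) = (\<lambda>x. x)"
  by (rule ext, simp add: up_name_def split: nat.split)+

lemma up_args_Nil[simp]: "up_args (\<lambda>_. []) = (\<lambda>_. [])"
  by (rule ext) (simp add: up_args_def split: nat.split)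

lemma psubst_id: "psubst M Var id (\<lambda>_. []) = M" "psubstc C Var id (\<lambda>_. []) = C"
  by (induction M and C) auto

lemma liftV_eq_psubst: "liftV k M = psubst M (\<lambda>i. if i < k then Var i else Var (Suc i)) id (\<lambda>_. [])"
  "liftVc k C = psubstc C (\<lambda>i. if i < k then Var i else Var (Suc i)) id (\<lambda>_. [])"
proof (induction M and C arbitrary: k and k)
  case (Lam M)
  have "up_var (\<lambda>i. if i < k then Var i else Var (Suc i)) =
    (\<lambda>i. if i < Suc k then Var i else Var (Suc i))"
    by (rule ext) (simp add: up_var_def split: nat.split)
  then show ?case using Lam by simp
next
  case (Mu C)
  have "(\<lambda>i. liftN 0 (if i < k then Var i else Var (Suc i))) =
    (\<lambda>i. if i < k then Var i else Var (Suc i))"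
    by (rule ext) simp
  then show ?case using Mu by simp
qed auto

lemma liftV0_eq_psubst: "liftV 0 M = psubst M (\<lambda>i. Var (Suc i)) id (\<lambda>_. [])"
  using liftV_eq_psubst(1)[of 0 M] by simp

lemma liftN_eq_psubst: "liftN k M = psubst M Var (\<lambda>a. if a < k then a else Suc a) (\<lambda>_. [])"
  "liftNc k C = psubstc C Var (\<lambda>a. if a < k then a else Suc a) (\<lambda>_. [])"
proof (induction M and C arbitrary: k and k)
  case (Mu C)
  have "up_name (\<lambda>a. if a < k then a else Suc a) = (\<lambda>a. if a < Suc k then a else Suc a)"
    by (rule ext) (simp add: up_name_def split: nat.split)
  then show ?case using Mu by simp
qed auto

lemma liftN0_eq_psubst: "liftN 0 M = psubst M Var Suc (\<lambda>_. [])"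
  using liftN_eq_psubst(1)[of 0 M] by simp

lemma psubst_apps: "psubst (apps M S) s z t = apps (psubst M s z t) (map (\<lambda>N. psubst N s z t) S)"
  by (induction S arbitrary: M) auto

lemma psubst_rename:
  "psubst (psubst M (\<lambda>i. Var (f i)) z (\<lambda>_. [])) s' z' t' =
    psubst M (\<lambda>i. s' (f i)) (\<lambda>a. z' (z a)) (\<lambda>a. t' (z a))"
  "psubstc (psubstc C (\<lambda>i. Var (f i)) z (\<lambda>_. [])) s' z' t' =
    psubstc C (\<lambda>i. s' (f i)) (\<lambda>a. z' (z a)) (\<lambda>a. t' (z a))"
proof (induction M and C arbitrary: f z s' z' t' and f z s' z' t')
  case (Lam M)
  have "up_var (\<lambda>i. Var (f i)) = (\<lambda>i. Var (case i of 0 \<Rightarrow> 0 | Suc j \<Rightarrow> Suc (f j)))"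
    by (rule up_var_Var_rename)
  moreover have "(\<lambda>i. up_var s' (case i of 0 \<Rightarrow> 0 | Suc j \<Rightarrow> Suc (f j))) = up_var (\<lambda>i. s' (f i))"
    by (rule ext) (simp add: up_var_def split: nat.split)
  ultimately show ?case using Lam by simp
next
  case (Mu C)
  have "(\<lambda>a. up_name z' (up_name z a)) = up_name (\<lambda>a. z' (z a))"
    by (rule ext) (simp add: up_name_def split: nat.split)
  moreover have "(\<lambda>a. up_args t' (up_name z a)) = up_args (\<lambda>a. t' (z a))"
    by (rule ext) (simp add: up_name_def up_args_def split: nat.split)
  ultimately show ?case using Mu by simp
qed (auto simp: psubst_apps)

lemma psubst_rename_names:
  "psubst (psubst M Var z (\<lambda>_. [])) s' z' t' = psubst M s' (\<lambda>a. z' (z a)) (\<lambda>a. t' (z a))"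
  "psubstc (psubstc C Var z (\<lambda>_. [])) s' z' t' = psubstc C s' (\<lambda>a. z' (z a)) (\<lambda>a. t' (z a))"
  using psubst_rename[where f="\<lambda>i. i"] by simp_all

lemma liftV0_eq_psubst_fun: "liftV 0 = (\<lambda>M. psubst M (\<lambda>i. Var (Suc i)) id (\<lambda>_. []))"
  by (rule ext) (rule liftV0_eq_psubst)

lemma liftN0_eq_psubst_fun: "liftN 0 = (\<lambda>M. psubst M Var Suc (\<lambda>_. []))"
  by (rule ext) (rule liftN0_eq_psubst)

lemma liftV0_rename:
  "liftV 0 (psubst X (\<lambda>i. Var (f i)) z (\<lambda>_. [])) =
    psubst X (\<lambda>i. Var (Suc (f i))) z (\<lambda>_. [])"
  by (simp add: liftV0_eq_psubst psubst_rename)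

lemma rename_liftV0:
  "psubst (liftV 0 X) (\<lambda>i. Var (g i)) z (\<lambda>_. []) =
    psubst X (\<lambda>i. Var (g (Suc i))) z (\<lambda>_. [])"
  by (simp add: liftV0_eq_psubst psubst_rename)

lemma liftN0_rename:
  "liftN 0 (psubst X (\<lambda>i. Var (f i)) z (\<lambda>_. [])) =
    psubst X (\<lambda>i. Var (f i)) (\<lambda>a. Suc (z a)) (\<lambda>_. [])"
  by (simp add: liftN0_eq_psubst psubst_rename)

lemma rename_liftN0:
  "psubst (liftN 0 X) (\<lambda>i. Var (g i)) z (\<lambda>_. []) =
    psubst X (\<lambda>i. Var (g i)) (\<lambda>a. z (Suc a)) (\<lambda>_. [])"
  by (simp add: liftN0_eq_psubst psubst_rename_names)

text \<open>Composition is first proved for a renaming on the outside, which is what is needed to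
  commute a substitution with the liftings done by \<open>up_var\<close> and \<open>up_args\<close>.\<close>

lemma rename_psubst:
  "psubst (psubst M s z t) (\<lambda>i. Var (f i)) z' (\<lambda>_. []) =
     psubst M (\<lambda>i. psubst (s i) (\<lambda>i. Var (f i)) z' (\<lambda>_. [])) (\<lambda>a. z' (z a))
       (\<lambda>a. map (\<lambda>N. psubst N (\<lambda>i. Var (f i)) z' (\<lambda>_. [])) (t a))"
  "psubstc (psubstc C s z t) (\<lambda>i. Var (f i)) z' (\<lambda>_. []) =
     psubstc C (\<lambda>i. psubst (s i) (\<lambda>i. Var (f i)) z' (\<lambda>_. [])) (\<lambda>a. z' (z a))
       (\<lambda>a. map (\<lambda>N. psubst N (\<lambda>i. Var (f i)) z' (\<lambda>_. [])) (t a))"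
proof (induction M and C arbitrary: s z t f z' and s z t f z')
  case (Lam M)
  define g where "g = (\<lambda>i. case i of 0 \<Rightarrow> 0 | Suc j \<Rightarrow> Suc (f j))"
  have u: "up_var (\<lambda>i. Var (f i)) = (\<lambda>i. Var (g i))" unfolding g_def by (rule up_var_Var_rename)
  have k: "\<And>X. psubst (liftV 0 X) (\<lambda>i. Var (g i)) z' (\<lambda>_. []) =
    liftV 0 (psubst X (\<lambda>i. Var (f i)) z' (\<lambda>_. []))"
    by (simp add: rename_liftV0 liftV0_rename g_def)
  have e1: "(\<lambda>i. psubst (up_var s i) (\<lambda>i. Var (g i)) z' (\<lambda>_. [])) =
    up_var (\<lambda>i. psubst (s i) (\<lambda>i. Var (f i)) z' (\<lambda>_. []))"
    by (rule ext) (simp add: up_var_def k split: nat.split, simp add: g_def)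
  have e2: "(\<lambda>a. map (\<lambda>N. psubst N (\<lambda>i. Var (g i)) z' (\<lambda>_. [])) (map (liftV 0) (t a))) =
     (\<lambda>a. map (liftV 0) (map (\<lambda>N. psubst N (\<lambda>i. Var (f i)) z' (\<lambda>_. [])) (t a)))"
    by (simp add: k o_def)
  show ?case using Lam[of "up_var s" z "\<lambda>a. map (liftV 0) (t a)" g z']
    by (simp add: u e1 e2 del: map_map)
next
  case (Mu C)
  have k: "\<And>X. psubst (liftN 0 X) (\<lambda>i. Var (f i)) (up_name z') (\<lambda>_. []) =
    liftN 0 (psubst X (\<lambda>i. Var (f i)) z' (\<lambda>_. []))"
    by (simp add: rename_liftN0 liftN0_rename up_name_def)
  have e1: "(\<lambda>a. up_name z' (up_name z a)) = up_name (\<lambda>a. z' (z a))"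
    by (rule ext) (simp add: up_name_def split: nat.split)
  have e2: "(\<lambda>a. map (\<lambda>N. psubst N (\<lambda>i. Var (f i)) (up_name z') (\<lambda>_. [])) (up_args t a)) =
      up_args (\<lambda>a. map (\<lambda>N. psubst N (\<lambda>i. Var (f i)) z' (\<lambda>_. [])) (t a))"
    by (rule ext) (simp add: up_args_def k split: nat.split)
  show ?case using Mu[of "\<lambda>i. liftN 0 (s i)" "up_name z" "up_args t" f "up_name z'"]
    by (simp add: e1 e2 k)
qed (auto simp: psubst_apps)

lemma rename_names_psubst:
  "psubst (psubst M s z t) Var z' (\<lambda>_. []) =
     psubst M (\<lambda>i. psubst (s i) Var z' (\<lambda>_. [])) (\<lambda>a. z' (z a))
       (\<lambda>a. map (\<lambda>N. psubst N Var z' (\<lambda>_. [])) (t a))"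
  using rename_psubst(1)[where f="\<lambda>i. i"] by simp

lemma psubst_liftV0_up:
  "psubst (liftV 0 X) (up_var s) z (\<lambda>a. map (liftV 0) (t a)) =
    liftV 0 (psubst X s z t)"
proof -
  have "psubst (liftV 0 X) (up_var s) z (\<lambda>a. map (liftV 0) (t a)) =
    psubst X (\<lambda>i. liftV 0 (s i)) z (\<lambda>a. map (liftV 0) (t a))"
    by (simp add: liftV0_eq_psubst psubst_rename up_var_def)
  also have "\<dots> = liftV 0 (psubst X s z t)"
    by (simp add: liftV0_eq_psubst_fun rename_psubst)
  finally show ?thesis .
qed

lemma liftN0_psubst:
  "psubst X (\<lambda>i. liftN 0 (s i)) (\<lambda>a. Suc (z a)) (\<lambda>a. map (liftN 0) (t a)) =
    liftN 0 (psubst X s z t)"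
  by (simp add: liftN0_eq_psubst_fun rename_names_psubst)

lemma psubst_liftN0_up:
  "psubst (liftN 0 X) (\<lambda>i. liftN 0 (s i)) (up_name z) (up_args t) =
    liftN 0 (psubst X s z t)"
proof -
  have "psubst (liftN 0 X) (\<lambda>i. liftN 0 (s i)) (up_name z) (up_args t) =
    psubst X (\<lambda>i. liftN 0 (s i)) (\<lambda>a. Suc (z a)) (\<lambda>a. map (liftN 0) (t a))"
    by (simp add: liftN0_eq_psubst psubst_rename_names up_name_def up_args_def)
  also have "\<dots> = liftN 0 (psubst X s z t)"
    by (simp add: liftN0_eq_psubst_fun rename_names_psubst)
  finally show ?thesis .
qed

lemma psubst_psubst:
  "psubst (psubst M s z t) s' z' t' =
     psubst M (\<lambda>i. psubst (s i) s' z' t') (\<lambda>a. z' (z a))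
       (\<lambda>a. map (\<lambda>N. psubst N s' z' t') (t a) @ t' (z a))"
  "psubstc (psubstc C s z t) s' z' t' =
     psubstc C (\<lambda>i. psubst (s i) s' z' t') (\<lambda>a. z' (z a))
       (\<lambda>a. map (\<lambda>N. psubst N s' z' t') (t a) @ t' (z a))"
proof (induction M and C arbitrary: s z t s' z' t' and s z t s' z' t')
  case (Lam M)
  have e1: "(\<lambda>i. psubst (up_var s i) (up_var s') z' (\<lambda>a. map (liftV 0) (t' a))) =
    up_var (\<lambda>i. psubst (s i) s' z' t')"
    by (rule ext) (simp add: up_var_def psubst_liftV0_up split: nat.split)
  have e2: "(\<lambda>a. map (\<lambda>N. psubst N (up_var s') z' (\<lambda>a. map (liftV 0) (t' a))) (map (liftV 0) (t a))
        @ map (liftV 0) (t' (z a))) =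
    (\<lambda>a. map (liftV 0) (map (\<lambda>N. psubst N s' z' t') (t a) @ t' (z a)))"
    by (simp add: psubst_liftV0_up o_def)
  show ?case
    using Lam[of "up_var s" z "\<lambda>a. map (liftV 0) (t a)" "up_var s'" z' "\<lambda>a. map (liftV 0) (t' a)"]
    by (simp add: e1 e2 del: map_map)
next
  case (Mu C)
  have e1: "(\<lambda>i. psubst (liftN 0 (s i)) (\<lambda>i. liftN 0 (s' i)) (up_name z') (up_args t')) =
    (\<lambda>i. liftN 0 (psubst (s i) s' z' t'))"
    by (simp add: psubst_liftN0_up)
  have e2: "(\<lambda>a. up_name z' (up_name z a)) = up_name (\<lambda>a. z' (z a))"
    by (rule ext) (simp add: up_name_def split: nat.split)
  have e3: "(\<lambda>a. map (\<lambda>N. psubst N (\<lambda>i. liftN 0 (s' i)) (up_name z') (up_args t')) (up_args t a)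
        @ up_args t' (up_name z a)) =
    up_args (\<lambda>a. map (\<lambda>N. psubst N s' z' t') (t a) @ t' (z a))"
    by (rule ext) (simp add: up_args_def up_name_def psubst_liftN0_up split: nat.split)
  show ?case
    using Mu[of "\<lambda>i. liftN 0 (s i)" "up_name z" "up_args t" "\<lambda>i. liftN 0 (s' i)" "up_name z'" "up_args t'"]
    by (simp add: e1 e2 e3)
qed (auto simp: psubst_apps)

lemma psubst_liftV0[simp]: "psubst (liftV 0 X) s z t = psubst X (\<lambda>i. s (Suc i)) z t"
  by (simp add: liftV0_eq_psubst psubst_rename)

lemma psubst_liftN0[simp]: "psubst (liftN 0 X) s z t = psubst X s (\<lambda>a. z (Suc a)) (\<lambda>a. t (Suc a))"
  by (simp add: liftN0_eq_psubst psubst_rename_names)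

lemma substV_eq_psubst:
  "substV M k N =
    psubst M (\<lambda>i. if i < k then Var i else if i = k then N else Var (i - 1)) id (\<lambda>_. [])"
  "substVc C k N =
    psubstc C (\<lambda>i. if i < k then Var i else if i = k then N else Var (i - 1)) id (\<lambda>_. [])"
proof (induction M and C arbitrary: k N and k N)
  case (Lam M)
  have "up_var (\<lambda>i. if i < k then Var i else if i = k then N else Var (i - 1)) =
        (\<lambda>i. if i < Suc k then Var i else if i = Suc k then liftV 0 N else Var (i - 1))"
    by (rule ext) (auto simp: up_var_def split: nat.split)
  then show ?case using Lam by simp
next
  case (Mu C)
  have "(\<lambda>i. liftN 0 (if i < k then Var i else if i = k then N else Var (i - 1))) =
        (\<lambda>i. if i < k then Var i else if i = k then liftN 0 N else Var (i - 1))"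
    by (rule ext) auto
  then show ?case using Mu by simp
qed auto

lemma sstruct_eq_psubst: "sstruct M k L = psubst M Var id (\<lambda>a. if a = k then [L] else [])"
  "sstructc C k L = psubstc C Var id (\<lambda>a. if a = k then [L] else [])"
proof (induction M and C arbitrary: k L and k L)
  case (Lam M)
  have "(\<lambda>a. map (liftV 0) (if a = k then [L] else [])) = (\<lambda>a. if a = k then [liftV 0 L] else [])"
    by (rule ext) auto
  then show ?case using Lam by simp
next
  case (Mu C)
  have "up_args (\<lambda>a. if a = k then [L] else []) = (\<lambda>a. if a = Suc k then [liftN 0 L] else [])"
    by (rule ext) (auto simp: up_args_def split: nat.split)
  then show ?case using Mu by simp
qed auto

definition scons :: "trm \<Rightarrow> (nat \<Rightarrow> trm) \<Rightarrow> nat \<Rightarrow> trm" where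
  "scons N s i = (case i of 0 \<Rightarrow> N | Suc j \<Rightarrow> s j)"

lemma substV0_psubst_up:
  "substV (psubst M (up_var s) z (\<lambda>a. map (liftV 0) (t a))) 0 N =
    psubst M (scons N s) z t"
proof -
  have e: "(\<lambda>i. psubst (up_var s i) (\<lambda>i. if i = 0 then N else Var (i - 1)) id (\<lambda>_. [])) = scons N s"
    by (rule ext) (simp add: up_var_def scons_def psubst_id split: nat.split)
  show ?thesis by (simp add: substV_eq_psubst psubst_psubst e o_def psubst_id)
qed

lemma psubst_substV0:
  "psubst (substV M 0 N) s z t =
    substV (psubst M (up_var s) z (\<lambda>a. map (liftV 0) (t a))) 0 (psubst N s z t)"
proof -
  have e: "(\<lambda>i. psubst (if i = 0 then N else Var (i - 1)) s z t) = scons (psubst N s z t) s"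
    by (rule ext) (simp add: scons_def split: nat.split)
  show ?thesis by (simp add: substV0_psubst_up[symmetric] substV_eq_psubst psubst_psubst e)
qed

lemma psubst_mu_redex:
  "psubst (Mu (sstructc C 0 (liftN 0 N))) s z t =
   Mu (sstructc (psubstc C (\<lambda>i. liftN 0 (s i)) (up_name z) (up_args t)) 0 (liftN 0 (psubst N s z t)))"
proof -
  let ?L = "liftN 0 (psubst N s z t)"
  have e1: "(\<lambda>i. psubst (liftN 0 (s i)) Var id (\<lambda>a. if a = 0 then [?L] else [])) = (\<lambda>i. liftN 0 (s i))"
    by (rule ext) (simp add: liftN0_eq_psubst psubst_rename_names)
  have e2: "(\<lambda>a. map (\<lambda>X. psubst X (\<lambda>i. liftN 0 (s i)) (up_name z) (up_args t)) (if a = 0 then [liftN 0 N] else [])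
        @ up_args t a) =
    (\<lambda>a. map (\<lambda>X. psubst X Var id (\<lambda>a. if a = 0 then [?L] else [])) (up_args t a)
        @ (if up_name z a = 0 then [?L] else []))"
    by (rule ext) (simp add: up_args_def up_name_def o_def liftN0_psubst split: nat.split,
        simp add: liftN0_eq_psubst)
  show ?thesis
    by (simp add: sstruct_eq_psubst psubst_psubst e1 e2 del: psubst_liftN0)
qed

definition ren :: "(nat \<Rightarrow> nat) \<Rightarrow> trm \<Rightarrow> trm" where
  "ren z M = psubst M Var z (\<lambda>_. [])"

lemma ren_apps: "ren z (apps M S) = apps (ren z M) (map (ren z) S)"
  unfolding ren_def[abs_def] by (simp add: psubst_apps)

lemma ren_ren: "ren z' (ren z M) = ren (\<lambda>a. z' (z a)) M"
  by (simp add: ren_def psubst_rename_names)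

lemma ren_id[simp]: "ren id M = M" "ren (\<lambda>a. a) M = M"
  by (simp_all add: ren_def psubst_id id_def[symmetric])

lemma ren_Var[simp]: "ren z (Var x) = Var x"
  by (simp add: ren_def)

lemma ren_App[simp]: "ren z (App M N) = App (ren z M) (ren z N)"
  by (simp add: ren_def)

lemma liftN0_is_ren: "liftN 0 M = ren Suc M"
  by (simp add: ren_def liftN0_eq_psubst)

lemma ren_psubst:
  "ren z' (psubst M s z t) =
    psubst M (\<lambda>i. ren z' (s i)) (\<lambda>a. z' (z a)) (\<lambda>a. map (ren z') (t a))"
  unfolding ren_def[abs_def] by (simp add: rename_names_psubst)

text \<open>\<open>psubstc C Var id (args0 S)\<close> pushes the stack \<open>S\<close> onto the commands on the name bound
  by \<open>Mu C\<close>: it is the body of the term that \<open>apps (Mu C) S\<close> reduces to by \<open>\<mu>\<close>-steps.\<close>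

definition args0 :: "trm list \<Rightarrow> nat \<Rightarrow> trm list" where
  "args0 S a = (if a = 0 then map (liftN 0) S else [])"

lemma args0_Nil[simp]: "args0 [] = (\<lambda>_. [])"
  by (rule ext) (simp add: args0_def)

lemma psubst_args0_mu_redex:
  "psubstc (sstructc C 0 (liftN 0 N)) Var id (args0 S') =
    psubstc C Var id (args0 (N # S'))"
proof -
  have e: "(\<lambda>a. map (\<lambda>X. psubst X Var id (args0 S')) (if a = 0 then [liftN 0 N] else []) @ args0 S' a) =
    args0 (N # S')"
    by (rule ext) (simp add: args0_def flip: liftN0_eq_psubst)
  show ?thesis by (simp add: sstruct_eq_psubst psubst_psubst e, simp add: id_def)
qed

lemma psubst_args0_Mu_body:
  "psubstc (psubstc C (\<lambda>i. liftN 0 (s i)) (up_name z) (up_args t)) Var id (args0 S) =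
   psubstc C (\<lambda>i. liftN 0 (s i)) (up_name z) (\<lambda>a. case a of 0 \<Rightarrow> map (liftN 0) S | Suc b \<Rightarrow> map (liftN 0) (t b))"
proof -
  have e1: "(\<lambda>i. psubst (liftN 0 (s i)) Var id (args0 S)) = (\<lambda>i. liftN 0 (s i))"
    by (rule ext) (simp add: args0_def flip: liftN0_eq_psubst)
  have e2: "(\<lambda>a. map (\<lambda>X. psubst X Var id (args0 S)) (up_args t a) @ args0 S (up_name z a)) =
     (\<lambda>a. case a of 0 \<Rightarrow> map (liftN 0) S | Suc b \<Rightarrow> map (liftN 0) (t b))"
    by (rule ext)
      (simp add: args0_def up_args_def up_name_def o_def split: nat.split flip: liftN0_eq_psubst)
  show ?thesis by (simp add: psubst_psubst e1 e2 del: psubst_liftN0)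
qed

section \<open>Reduction\<close>

lemma red_apps: "red M M' \<Longrightarrow> red (apps M S) (apps M' S)"
  by (induction S arbitrary: M M') (auto intro: red_redc.intros)

lemma red_psubst: "red M M' \<Longrightarrow> red (psubst M s z t) (psubst M' s z t)"
  "redc C C' \<Longrightarrow> redc (psubstc C s z t) (psubstc C' s z t)"
proof (induction arbitrary: s z t and s z t rule: red_redc.inducts)
  case (beta M N)
  show ?case unfolding psubst_substV0 by (simp add: red_redc.beta)
next
  case (mu C N)
  show ?case unfolding psubst_mu_redex by (simp add: red_redc.mu)
next
  case (named M M' a)
  then show ?case by (simp add: red_redc.named red_apps)
qed (auto intro: red_redc.intros)

inductive_cases redVarE: "red (Var x) Y"
inductive_cases redLamE: "red (Lam M) Y"
inductive_cases redAppE: "red (App M N) Y"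
inductive_cases redMuE: "red (Mu C) Y"
inductive_cases redcNamedE: "redc (Named a M) C'"

lemma red_App_cases: "red (App M N) Y \<Longrightarrow>
   (\<exists>P. M = Lam P \<and> Y = substV P 0 N) \<or> (\<exists>C. M = Mu C \<and> Y = Mu (sstructc C 0 (liftN 0 N))) \<or>
   (\<exists>M'. red M M' \<and> Y = App M' N) \<or> (\<exists>N'. red N N' \<and> Y = App M N')"
  by (erule redAppE) auto

lemma red_Lam_cases: "red (Lam M) Y \<Longrightarrow> \<exists>M'. red M M' \<and> Y = Lam M'"
  by (erule redLamE) auto

lemma red_Mu_cases: "red (Mu C) Y \<Longrightarrow> \<exists>C'. redc C C' \<and> Y = Mu C'"
  by (erule redMuE) auto

lemma redc_Named_cases: "redc (Named a M) C' \<Longrightarrow> \<exists>M'. red M M' \<and> C' = Named a M'"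
  by (erule redcNamedE) auto

lemma red_Var_cases: "\<not> red (Var x) Y"
  by (auto elim: redVarE)

lemma apps_snoc: "apps M (S @ [N]) = App (apps M S) N" by simp

lemma apps_eq_Lam: "apps M S = Lam P \<Longrightarrow> S = [] \<and> M = Lam P"
  by (cases S rule: rev_cases) simp_all

lemma apps_eq_Mu: "apps M S = Mu C \<Longrightarrow> S = [] \<and> M = Mu C"
  by (cases S rule: rev_cases) simp_all

lemma red_apps_Var: "red (apps (Var x) S) Y \<Longrightarrow> \<exists>S'. Y = apps (Var x) S'"
proof (induction S arbitrary: Y rule: rev_induct)
  case Nil then show ?case by (auto elim: redVarE)
next
  case (snoc N S)
  from red_App_cases[OF snoc.prems[unfolded apps_snoc]] show ?case
  proof (elim disjE exE conjE)
    fix P assume "apps (Var x) S = Lam P" then show ?thesis using apps_eq_Lam[of "Var x" S] by simp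
  next
    fix C assume "apps (Var x) S = Mu C" then show ?thesis using apps_eq_Mu[of "Var x" S] by simp
  next
    fix M' assume "red (apps (Var x) S) M'" "Y = App M' N"
    moreover obtain S' where "M' = apps (Var x) S'" using snoc.IH calculation(1) by blast
    ultimately show ?thesis by (metis apps_snoc)
  next
    fix N' assume "Y = App (apps (Var x) S) N'"
    then show ?thesis by (metis apps_snoc)
  qed
qed

inductive red_args :: "trm list \<Rightarrow> trm list \<Rightarrow> bool" where
  ra_head: "red N N' \<Longrightarrow> red_args (N # S) (N' # S)"
| ra_tail: "red_args S S' \<Longrightarrow> red_args (N # S) (N # S')"

lemma red_args_snoc_left: "red_args S S' \<Longrightarrow> red_args (S @ [N]) (S' @ [N])"
  by (induction rule: red_args.induct) (auto intro: red_args.intros)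

lemma red_args_snoc_right: "red N N' \<Longrightarrow> red_args (S @ [N]) (S @ [N'])"
  by (induction S) (auto intro: red_args.intros)

lemma red_apps_args: "red_args S S' \<Longrightarrow> red (apps M S) (apps M S')"
  by (induction arbitrary: M rule: red_args.induct) (auto intro: red_apps red_redc.appR)

lemma red_args_length: "red_args S S' \<Longrightarrow> length S' = length S"
  by (induction rule: red_args.induct) auto

lemma red_args_reds: "red_args S S' \<Longrightarrow> list_all2 red\<^sup>*\<^sup>* S S'"
  by (induction rule: red_args.induct) (auto simp: list_all2_refl)

lemma red_apps_head: "red (apps X S) Y \<Longrightarrow> (\<forall>P. X \<noteq> Lam P) \<Longrightarrow> (\<forall>C. X \<noteq> Mu C) \<Longrightarrow>
   (\<exists>X'. red X X' \<and> Y = apps X' S) \<or> (\<exists>S'. red_args S S' \<and> Y = apps X S')"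
proof (induction S arbitrary: Y rule: rev_induct)
  case Nil then show ?case by simp
next
  case (snoc N S)
  from red_App_cases[OF snoc.prems(1)[unfolded apps_snoc]] show ?case
  proof (elim disjE exE conjE)
    fix P assume "apps X S = Lam P" then show ?thesis using apps_eq_Lam[of X S] snoc.prems by simp
  next
    fix C assume "apps X S = Mu C" then show ?thesis using apps_eq_Mu[of X S] snoc.prems by simp
  next
    fix M' assume r: "red (apps X S) M'" and Y: "Y = App M' N"
    from snoc.IH[OF r snoc.prems(2,3)] show ?thesis
    proof (elim disjE exE conjE)
      fix X' assume "red X X'" "M' = apps X' S"
      moreover have "Y = apps X' (S @ [N])" using Y calculation(2) by simp
      ultimately show ?thesis by blast
    next
      fix S' assume "red_args S S'" "M' = apps X S'"
        then show ?thesis using Y red_args_snoc_left by fastforce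
    qed
  next
    fix N' assume "red N N'" "Y = App (apps X S) N'"
    then show ?thesis using red_args_snoc_right by fastforce
  qed
qed

lemma red_beta_redex_apps_cases:
  assumes "red (apps (App (Lam M) N) S) Y"
  obtains (contract) "Y = apps (substV M 0 N) S"
  | (body) M' where "red M M'" "Y = apps (App (Lam M') N) S"
  | (arg) N' where "red N N'" "Y = apps (App (Lam M) N') S"
  | (stack) S' where "red_args S S'" "Y = apps (App (Lam M) N) S'"
proof -
  from red_apps_head[OF assms] consider
    (head) X' where "red (App (Lam M) N) X'" "Y = apps X' S"
  | (args) S' where "red_args S S'" "Y = apps (App (Lam M) N) S'"
    by auto
  then show ?thesis
  proof cases
    case head
    from red_App_cases[OF head(1)] show ?thesis
      using head(2) that(1-3) by (auto dest: red_Lam_cases)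
  qed (rule that(4))
qed

lemma red_mu_redex_apps_cases:
  assumes "red (apps (App (Mu C) N) S) Y"
  obtains (contract) "Y = apps (Mu (sstructc C 0 (liftN 0 N))) S"
  | (body) C' where "redc C C'" "Y = apps (App (Mu C') N) S"
  | (arg) N' where "red N N'" "Y = apps (App (Mu C) N') S"
  | (stack) S' where "red_args S S'" "Y = apps (App (Mu C) N) S'"
proof -
  from red_apps_head[OF assms] consider
    (head) X' where "red (App (Mu C) N) X'" "Y = apps X' S"
  | (args) S' where "red_args S S'" "Y = apps (App (Mu C) N) S'"
    by auto
  then show ?thesis
  proof cases
    case head
    from red_App_cases[OF head(1)] show ?thesis
      using head(2) that(1-3) by (auto dest: red_Mu_cases)
  qed (rule that(4))
qed

lemma rtranclp_map:
  assumes "\<And>x y. R x y \<Longrightarrow> R' (f x) (f y)"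
  shows "R\<^sup>*\<^sup>* x y \<Longrightarrow> R'\<^sup>*\<^sup>* (f x) (f y)"
  by (induction rule: rtranclp_induct) (auto intro: rtranclp.rtrancl_into_rtrancl assms)

lemma reds_App: "red\<^sup>*\<^sup>* M M' \<Longrightarrow> red\<^sup>*\<^sup>* N N' \<Longrightarrow> red\<^sup>*\<^sup>* (App M N) (App M' N')"
  using rtranclp_map[of red red "\<lambda>x. App x N", OF red_redc.appL]
    rtranclp_map[of red red "\<lambda>x. App M' x", OF red_redc.appR]
  by (meson rtranclp_trans)

lemma reds_Lam: "red\<^sup>*\<^sup>* M M' \<Longrightarrow> red\<^sup>*\<^sup>* (Lam M) (Lam M')"
  by (rule rtranclp_map[of red red Lam, OF red_redc.lam])

lemma reds_Mu: "redc\<^sup>*\<^sup>* C C' \<Longrightarrow> red\<^sup>*\<^sup>* (Mu C) (Mu C')"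
  by (rule rtranclp_map[of redc red Mu, OF red_redc.muC])

lemma reds_Named: "red\<^sup>*\<^sup>* M M' \<Longrightarrow> redc\<^sup>*\<^sup>* (Named a M) (Named a M')"
  by (rule rtranclp_map[of red redc "Named a", OF red_redc.named])

lemma reds_apps: "list_all2 red\<^sup>*\<^sup>* S S' \<Longrightarrow> red\<^sup>*\<^sup>* P P' \<Longrightarrow> red\<^sup>*\<^sup>* (apps P S) (apps P' S')"
proof (induction S S' arbitrary: P P' rule: list_all2_induct)
  case Nil then show ?case by simp
next
  case (Cons x xs y ys)
  then show ?case using reds_App by simp
qed

lemma reds_psubst: "red\<^sup>*\<^sup>* M M' \<Longrightarrow> red\<^sup>*\<^sup>* (psubst M s z t) (psubst M' s z t)"
  using rtranclp_map[of red red "\<lambda>x. psubst x s z t"] red_psubst(1) by blast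

lemma reds_liftV0: "red\<^sup>*\<^sup>* M M' \<Longrightarrow> red\<^sup>*\<^sup>* (liftV 0 M) (liftV 0 M')"
  unfolding liftV0_eq_psubst by (rule reds_psubst)

lemma reds_liftN0: "red\<^sup>*\<^sup>* M M' \<Longrightarrow> red\<^sup>*\<^sup>* (liftN 0 M) (liftN 0 M')"
  unfolding liftN0_eq_psubst by (rule reds_psubst)

lemma reds_psubst_args:
  "(\<forall>i. red\<^sup>*\<^sup>* (s i) (s' i)) \<Longrightarrow> (\<forall>a. list_all2 red\<^sup>*\<^sup>* (t a) (t' a)) \<Longrightarrow>
    red\<^sup>*\<^sup>* (psubst M s z t) (psubst M s' z t')"
  "(\<forall>i. red\<^sup>*\<^sup>* (s i) (s' i)) \<Longrightarrow> (\<forall>a. list_all2 red\<^sup>*\<^sup>* (t a) (t' a)) \<Longrightarrow>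
    redc\<^sup>*\<^sup>* (psubstc C s z t) (psubstc C s' z t')"
proof (induction M and C arbitrary: s s' z t t' and s s' z t t')
  case (Lam M)
  have "\<forall>i. red\<^sup>*\<^sup>* (up_var s i) (up_var s' i)"
    using Lam.prems(1) by (auto simp: up_var_def reds_liftV0 split: nat.split)
  moreover have "\<forall>a. list_all2 red\<^sup>*\<^sup>* (map (liftV 0) (t a)) (map (liftV 0) (t' a))"
    using Lam.prems(2) by (auto simp: list_all2_map1 list_all2_map2 intro: list_all2_mono reds_liftV0)
  ultimately show ?case using Lam.IH by (simp add: reds_Lam)
next
  case (App M N)
  then show ?case by (simp add: reds_App)
next
  case (Mu C)
  have "\<forall>i. red\<^sup>*\<^sup>* (liftN 0 (s i)) (liftN 0 (s' i))"
    using Mu.prems(1) by (auto simp: reds_liftN0)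
  moreover have "\<forall>a. list_all2 red\<^sup>*\<^sup>* (up_args t a) (up_args t' a)"
    using Mu.prems(2) by (auto simp: up_args_def list_all2_map1 list_all2_map2
        intro: list_all2_mono reds_liftN0 split: nat.split)
  ultimately show ?case using Mu.IH by (simp add: reds_Mu)
next
  case (Named a M)
  then show ?case by (simp add: reds_Named reds_apps)
qed simp

lemma reds_args0: "list_all2 red\<^sup>*\<^sup>* S S' \<Longrightarrow> list_all2 red\<^sup>*\<^sup>* (args0 S a) (args0 S' a)"
  by (auto simp: args0_def list_all2_map1 list_all2_map2 intro: list_all2_mono reds_liftN0)

lemma reds_substV0: "red\<^sup>*\<^sup>* N N' \<Longrightarrow> red\<^sup>*\<^sup>* (substV M 0 N) (substV M 0 N')"
  unfolding substV_eq_psubst by (intro reds_psubst_args) auto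

lemma rename_eq_Lam:
  "psubst M Var z (\<lambda>_. []) =
    Lam P \<Longrightarrow> \<exists>M0. M = Lam M0 \<and> P = psubst M0 Var z (\<lambda>_. [])"
  by (cases M) auto

lemma rename_eq_Mu:
  "psubst M Var z (\<lambda>_. []) =
    Mu C \<Longrightarrow> \<exists>C0. M = Mu C0 \<and> C = psubstc C0 Var (up_name z) (\<lambda>_. [])"
  by (cases M) auto

lemma red_rename_back:
  "red (psubst M Var z (\<lambda>_. [])) Y \<Longrightarrow> \<exists>M'. red M M' \<and> Y = psubst M' Var z (\<lambda>_. [])"
  "redc (psubstc C Var z (\<lambda>_. [])) C' \<Longrightarrow> \<exists>C''. redc C C'' \<and> C' = psubstc C'' Var z (\<lambda>_. [])"
proof (induction M and C arbitrary: z Y and z C')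
  case (Var x)
  then show ?case using red_Var_cases by simp
next
  case (Lam M)
  then obtain M' where "red (psubst M Var z (\<lambda>_. [])) M'" "Y = Lam M'"
    using red_Lam_cases by fastforce
  moreover obtain M'' where "red M M''" "M' = psubst M'' Var z (\<lambda>_. [])"
    using Lam.IH calculation(1) by blast
  ultimately show ?case by (intro exI[of _ "Lam M''"]) (simp add: red_redc.lam)
next
  case (App M N)
  from red_App_cases[OF App.prems[simplified]] show ?case
  proof (elim disjE exE conjE)
    fix P assume "psubst M Var z (\<lambda>_. []) = Lam P" and Y: "Y = substV P 0 (psubst N Var z (\<lambda>_. []))"
    then obtain M0 where M: "M = Lam M0" "P = psubst M0 Var z (\<lambda>_. [])" using rename_eq_Lam by blast
    have "Y = psubst (substV M0 0 N) Var z (\<lambda>_. [])" unfolding Y M psubst_substV0 by simp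
    then show ?thesis using M by (blast intro: red_redc.beta)
  next
    fix C assume "psubst M Var z (\<lambda>_. []) =
      Mu C" and Y: "Y = Mu (sstructc C 0 (liftN 0 (psubst N Var z (\<lambda>_. []))))"
    then obtain C0 where M: "M = Mu C0" "C = psubstc C0 Var (up_name z) (\<lambda>_. [])"
      using rename_eq_Mu by blast
    have "Y = psubst (Mu (sstructc C0 0 (liftN 0 N))) Var z (\<lambda>_. [])"
      unfolding Y M psubst_mu_redex by simp
    then show ?thesis using M by (blast intro: red_redc.mu)
  next
    fix M' assume "red (psubst M Var z (\<lambda>_. [])) M'" "Y = App M' (psubst N Var z (\<lambda>_. []))"
    then show ?thesis using App.IH(1) by (fastforce intro: red_redc.appL)
  next
    fix N' assume "red (psubst N Var z (\<lambda>_. [])) N'" "Y = App (psubst M Var z (\<lambda>_. [])) N'"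
    then show ?thesis using App.IH(2) by (fastforce intro: red_redc.appR)
  qed
next
  case (Mu C)
  then obtain C' where "redc (psubstc C Var (up_name z) (\<lambda>_. [])) C'" "Y = Mu C'"
    using red_Mu_cases by fastforce
  moreover obtain C'' where "redc C C''" "C' = psubstc C'' Var (up_name z) (\<lambda>_. [])"
    using Mu.IH calculation(1) by blast
  ultimately show ?case by (intro exI[of _ "Mu C''"]) (simp add: red_redc.muC)
next
  case (Named a M)
  then obtain M' where "red (psubst M Var z (\<lambda>_. [])) M'" "C' = Named (z a) M'"
    using redc_Named_cases by fastforce
  then show ?case using Named.IH by (fastforce intro: red_redc.named)
qed

section \<open>Strong normalisation\<close>

inductive sn :: "trm \<Rightarrow> bool" where
  sn_intro: "(\<And>y. red x y \<Longrightarrow> sn y) \<Longrightarrow> sn x"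

lemma sn_imp_SN: "sn M \<Longrightarrow> SN M"
proof -
  have "sn x \<Longrightarrow> \<forall>f. f 0 = x \<longrightarrow> \<not> (\<forall>i. red (f i) (f (Suc i)))" for x
  proof (induction rule: sn.induct)
    case (sn_intro x)
    show ?case
    proof (intro allI impI notI)
      fix f assume f0: "f 0 = x" and chain: "\<forall>i. red (f i) (f (Suc i))"
      then have "red x (f (Suc 0))" by (metis chain)
      then have "\<forall>g. g 0 = f (Suc 0) \<longrightarrow> \<not> (\<forall>i. red (g i) (g (Suc i)))" using sn_intro.IH by blast
      from this[rule_format, of "\<lambda>i. f (Suc i)"] chain show False by simp
    qed
  qed
  then show "sn M \<Longrightarrow> SN M" unfolding SN_def by blast
qed

lemma sn_tranclp_induct[consumes 1, case_names step]:
  assumes "sn x" and step: "\<And>x. sn x \<Longrightarrow> (\<And>y. red\<^sup>+\<^sup>+ x y \<Longrightarrow> P y) \<Longrightarrow> P x"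
  shows "P x"
proof -
  have "(\<forall>y. red\<^sup>+\<^sup>+ x y \<longrightarrow> P y) \<and> P x" using assms(1)
  proof (induction rule: sn.induct)
    case (sn_intro x)
    have "\<forall>y. red\<^sup>+\<^sup>+ x y \<longrightarrow> P y"
    proof (intro allI impI)
      fix y assume "red\<^sup>+\<^sup>+ x y"
      then obtain w where w: "red x w" "red\<^sup>*\<^sup>* w y" using tranclpD by metis
      then have "w = y \<or> red\<^sup>+\<^sup>+ w y" by (metis rtranclpD)
      then show "P y" using sn_intro.IH w(1) by blast
    qed
    moreover have "sn x" using sn_intro.hyps by (rule sn.sn_intro)
    ultimately show ?case using step by blast
  qed
  then show ?thesis by blast
qed

lemma sn_preimage:
  assumes "\<And>M M'. red M M' \<Longrightarrow> red (f M) (f M')" and "sn (f M)"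
  shows "sn M"
proof -
  have "sn X \<Longrightarrow> \<forall>M. X = f M \<longrightarrow> sn M" for X
  proof (induction rule: sn.induct)
    case (sn_intro X)
    show ?case
    proof (intro allI impI)
      fix M assume X: "X = f M"
      show "sn M"
      proof (rule sn.sn_intro)
        fix M' assume "red M M'"
        then have "red X (f M')" using X assms(1) by simp
        then show "sn M'" using sn_intro.IH by blast
      qed
    qed
  qed
  then show ?thesis using assms(2) by blast
qed

lemma sn_image:
  assumes "\<And>M Y. red (f M) Y \<Longrightarrow> \<exists>M'. red M M' \<and> Y = f M'" and "sn M"
  shows "sn (f M)"
  using assms(2)
proof induction
  case (sn_intro M)
  show ?case
  proof (rule sn.sn_intro)
    fix Y assume "red (f M) Y"
    then obtain M' where "red M M'" "Y = f M'" using assms(1) by blast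
    then show "sn Y" using sn_intro.IH by blast
  qed
qed

lemma sn_AppD:
  assumes "sn (App M N)"
  shows "sn M \<and> sn N"
  using sn_preimage[where f="\<lambda>M. App M N", OF red_redc.appL assms]
    sn_preimage[where f="\<lambda>N. App M N", OF red_redc.appR assms] by blast

lemma sn_appsD: "sn (apps M S) \<Longrightarrow> sn M \<and> (\<forall>N\<in>set S. sn N)"
proof (induction S arbitrary: M)
  case (Cons N S)
  from Cons.prems have "sn (apps (App M N) S)" by simp
  with Cons.IH have "sn (App M N)" and S: "\<forall>x\<in>set S. sn x" by blast+
  then have "sn M" "sn N" using sn_AppD by blast+
  then show ?case using S by simp
qed simp

lemma sn_psubstD: "sn (psubst M s z t) \<Longrightarrow> sn M"
  by (rule sn_preimage[where f="\<lambda>M. psubst M s z t", OF red_psubst(1)])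

lemma sn_rename: "sn M \<Longrightarrow> sn (ren z M)"
  unfolding ren_def by (rule sn_image[where f="\<lambda>M. psubst M Var z (\<lambda>_. [])", OF red_rename_back(1)])

lemma sn_Mu_Named: "sn P \<Longrightarrow> sn (Mu (Named b P))"
proof (rule sn_image[where f="\<lambda>P. Mu (Named b P)"])
  fix P Y assume "red (Mu (Named b P)) Y"
  then obtain C' where "redc (Named b P) C'" "Y = Mu C'" using red_Mu_cases by blast
  then show "\<exists>P'. red P P' \<and> Y = Mu (Named b P')" using redc_Named_cases by blast
qed

lemma sn_App_neutral:
  assumes "sn Q" and "\<exists>S. Q = apps (Var x) S" and "sn N"
  shows "sn (App Q N)"
  using assms
proof (induction Q arbitrary: N rule: sn.induct)
  case (sn_intro Q)
  note outer = sn_intro.IH and neutral = sn_intro.prems(1)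
  from \<open>sn N\<close> show ?case
  proof (induction rule: sn.induct)
    case (sn_intro N)
    show ?case
    proof (rule sn.sn_intro)
      fix Y assume "red (App Q N) Y"
      from red_App_cases[OF this] show "sn Y"
      proof (elim disjE exE conjE)
        fix Q' assume r: "red Q Q'" and Y: "Y = App Q' N"
        have "\<exists>S. Q' = apps (Var x) S" using neutral r red_apps_Var by blast
        then show ?thesis using outer[OF r] Y sn.sn_intro[OF sn_intro.hyps] by blast
      next
        fix N' assume "red N N'" "Y = App Q N'"
        then show ?thesis using sn_intro.IH by blast
      qed (use neutral in \<open>auto dest!: apps_eq_Lam[OF sym] apps_eq_Mu[OF sym]\<close>)
    qed
  qed
qed

lemma sn_apps_Var: "\<forall>N\<in>set S. sn N \<Longrightarrow> sn (apps (Var x) S)"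
proof (induction S rule: rev_induct)
  case Nil then show ?case by (auto intro: sn.sn_intro elim: redVarE)
next
  case (snoc N S)
  then show ?case unfolding apps_snoc using sn_App_neutral by auto
qed

lemma sn_Var[simp]: "sn (Var x)"
  using sn_apps_Var[of "[]"] by simp

text \<open>The hypotheses of the two expansion lemmas are packed into one neutral term, a witness,
  whose strong normalisation supports a single induction along \<open>red\<^sup>+\<^sup>+\<close> that covers
  reductions inside the redex and inside the stack.\<close>

definition beta_witness :: "trm \<Rightarrow> trm \<Rightarrow> trm list \<Rightarrow> trm" where
  "beta_witness M N S = App (App (Var 0) (apps (substV M 0 N) S)) N"

lemma beta_witness_body: "red M M' \<Longrightarrow> red (beta_witness M N S) (beta_witness M' N S)"
  unfolding beta_witness_def substV_eq_psubst
  by (intro red_redc.appL red_redc.appR red_apps red_psubst(1))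

lemma beta_witness_arg: "red N N' \<Longrightarrow> red\<^sup>+\<^sup>+ (beta_witness M N S) (beta_witness M N' S)"
proof -
  assume N: "red N N'"
  then have "red\<^sup>*\<^sup>* (beta_witness M N S) (App (App (Var 0) (apps (substV M 0 N') S)) N)"
    unfolding beta_witness_def
    by (intro reds_App reds_apps reds_substV0) (simp_all add: list_all2_refl)
  moreover have "red (App (App (Var 0) (apps (substV M 0 N') S)) N) (beta_witness M N' S)"
    unfolding beta_witness_def using N by (rule red_redc.appR)
  ultimately show ?thesis by (rule rtranclp_into_tranclp1)
qed

lemma beta_witness_stack: "red_args S S' \<Longrightarrow> red (beta_witness M N S) (beta_witness M N S')"
  unfolding beta_witness_def by (intro red_redc.appL red_redc.appR red_apps_args)

lemma sn_beta_expand: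
  assumes "sn N" and "sn (apps (substV M 0 N) S)"
  shows "sn (apps (App (Lam M) N) S)"
proof -
  have "sn Q \<Longrightarrow> Q = beta_witness M N S \<Longrightarrow> sn (apps (App (Lam M) N) S)" for Q M N S
  proof (induction Q arbitrary: M N S rule: sn_tranclp_induct)
    case (step Q)
    have contractum: "sn (apps (substV M 0 N) S)"
      using step.hyps step.prems unfolding beta_witness_def by (auto dest: sn_AppD)
    show ?case
    proof (rule sn.sn_intro)
      fix Y assume "red (apps (App (Lam M) N) S) Y"
      then show "sn Y"
      proof (cases rule: red_beta_redex_apps_cases)
        case contract
        then show ?thesis using contractum by simp
      next
        case (body M')
        then show ?thesis using step.IH beta_witness_body unfolding step.prems by blast
      next
        case (arg N')
        then show ?thesis using step.IH beta_witness_arg unfolding step.prems by blast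
      next
        case (stack S')
        then show ?thesis using step.IH beta_witness_stack unfolding step.prems by blast
      qed
    qed
  qed
  moreover have "sn (beta_witness M N S)"
    unfolding beta_witness_def using assms sn_apps_Var[of "[apps (substV M 0 N) S, N]" 0] by simp
  ultimately show ?thesis by blast
qed

definition mu_witness :: "cmd \<Rightarrow> trm list \<Rightarrow> trm" where
  "mu_witness C S = apps (Var 0) (Mu (psubstc C Var id (args0 S)) # S)"

lemma mu_witness_body: "redc C C' \<Longrightarrow> red (mu_witness C S) (mu_witness C' S)"
  unfolding mu_witness_def by (intro red_apps_args ra_head red_redc.muC red_psubst(2))

lemma mu_witness_stack: "red_args S S' \<Longrightarrow> red\<^sup>+\<^sup>+ (mu_witness C S) (mu_witness C S')"
proof -
  assume S: "red_args S S'"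
  have "list_all2 red\<^sup>*\<^sup>* (args0 S a) (args0 S' a)" for a
    using red_args_reds[OF S] by (rule reds_args0)
  then have "red\<^sup>*\<^sup>* (Mu (psubstc C Var id (args0 S))) (Mu (psubstc C Var id (args0 S')))"
    by (intro reds_Mu reds_psubst_args) auto
  then have "red\<^sup>*\<^sup>* (mu_witness C S) (apps (Var 0) (Mu (psubstc C Var id (args0 S')) # S))"
    unfolding mu_witness_def by (intro reds_apps) (simp_all add: list_all2_refl)
  moreover have "red (apps (Var 0) (Mu (psubstc C Var id (args0 S')) # S)) (mu_witness C S')"
    unfolding mu_witness_def using S by (intro red_apps_args ra_tail)
  ultimately show ?thesis by (rule rtranclp_into_tranclp1)
qed

lemma sn_mu_expand_Cons:
  assumes shorter: "\<And>S C. length S \<le> n \<Longrightarrow> \<forall>x\<in>set S. sn x \<Longrightarrow>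
      sn (Mu (psubstc C Var id (args0 S))) \<Longrightarrow> sn (apps (Mu C) S)"
    and "length S = n" and "\<forall>x\<in>set (N # S). sn x"
    and "sn (Mu (psubstc C Var id (args0 (N # S))))"
  shows "sn (apps (Mu C) (N # S))"
proof -
  have "sn Q \<Longrightarrow> Q = mu_witness C (N # S) \<Longrightarrow> length S = n \<Longrightarrow> sn (apps (Mu C) (N # S))"
    for Q C N S
  proof (induction Q arbitrary: C N S rule: sn_tranclp_induct)
    case (step Q)
    have "\<forall>x\<in>set (Mu (psubstc C Var id (args0 (N # S))) # N # S). sn x"
      using step.hyps unfolding step.prems(1) mu_witness_def by (rule sn_appsD[THEN conjunct2])
    then have body: "sn (Mu (psubstc C Var id (args0 (N # S))))" "\<forall>x\<in>set S. sn x" by simp_all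
    show ?case
    proof (rule sn.sn_intro)
      fix Y assume "red (apps (Mu C) (N # S)) Y"
      then have "red (apps (App (Mu C) N) S) Y" by simp
      then show "sn Y"
      proof (cases rule: red_mu_redex_apps_cases)
        case contract
        have "sn (Mu (psubstc (sstructc C 0 (liftN 0 N)) Var id (args0 S)))"
          using body(1) by (simp only: psubst_args0_mu_redex)
        with shorter show ?thesis unfolding contract using step.prems(2) body(2) by simp
      next
        case (body C')
        then have "red\<^sup>+\<^sup>+ Q (mu_witness C' (N # S))"
          unfolding step.prems(1) by (intro tranclp.r_into_trancl mu_witness_body)
        from step.IH[OF this refl step.prems(2)] show ?thesis unfolding body(2) by simp
      next
        case (arg N')
        then have "red\<^sup>+\<^sup>+ Q (mu_witness C (N' # S))"
          unfolding step.prems(1) by (intro mu_witness_stack ra_head)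
        from step.IH[OF this refl step.prems(2)] show ?thesis unfolding arg(2) by simp
      next
        case (stack S')
        then have "red\<^sup>+\<^sup>+ Q (mu_witness C (N # S'))"
          unfolding step.prems(1) by (intro mu_witness_stack ra_tail)
        moreover have "length S' = n" using stack(1) step.prems(2) red_args_length by simp
        ultimately have "sn (apps (Mu C) (N # S'))" using step.IH by blast
        then show ?thesis unfolding stack(2) by simp
      qed
    qed
  qed
  moreover have "sn (mu_witness C (N # S))"
    unfolding mu_witness_def using assms(3,4) by (intro sn_apps_Var) auto
  ultimately show ?thesis using assms(2) by blast
qed

lemma sn_mu_expand: "\<forall>x\<in>set S. sn x \<Longrightarrow> sn (Mu (psubstc C Var id (args0 S))) \<Longrightarrow> sn (apps (Mu C) S)"
proof (induction "length S" arbitrary: S C rule: less_induct)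
  case less
  show ?case
  proof (cases S)
    case Nil
    then show ?thesis using less.prems by (simp add: psubst_id)
  next
    case (Cons N S')
    show ?thesis unfolding Cons
    proof (rule sn_mu_expand_Cons[where n="length S'"])
      fix S'' C' assume "length S'' \<le> length S'" "\<forall>x\<in>set S''. sn x"
        "sn (Mu (psubstc C' Var id (args0 S'')))"
      then show "sn (apps (Mu C') S'')" using less.hyps[of S'' C'] Cons by simp
    qed (use less.prems Cons in simp_all)
  qed
qed

section \<open>Interpretation of types\<close>

definition sn_args :: "trm list set" where
  "sn_args = {S. \<forall>N\<in>set S. sn N}"

definition sn_appl :: "trm set" where
  "sn_appl = {M. \<forall>z S. S \<in> sn_args \<longrightarrow> sn (apps (ren z M) S)}"

text \<open>Realizers of an arrow
  type must work after every renaming of names, because substitution under \<open>\<mu>\<close> renames them.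
  The empty stack realizes \<open>\<delta> \<times> \<kappa>\<close> only when \<open>\<omega> \<le> \<omega> \<times> \<omega>\<close> forces it, i.e. when \<open>\<delta>\<close> is trivial and
  the empty stack realizes \<open>\<kappa>\<close>.\<close>

primrec ty_sem :: "ty \<Rightarrow> trm set \<times> trm list set" where
  "ty_sem (Psi a) = ((case a of Bot \<Rightarrow> UNIV | Top \<Rightarrow> sn_appl), {})"
| "ty_sem Om = (UNIV, sn_args)"
| "ty_sem (Meet a b) = (fst (ty_sem a) \<inter> fst (ty_sem b), snd (ty_sem a) \<inter> snd (ty_sem b))"
| "ty_sem (Arr k r) = ({M. \<forall>z S. S \<in> snd (ty_sem k) \<longrightarrow> apps (ren z M) S \<in> fst (ty_sem r)}, {})"
| "ty_sem (ty.Prod d k) = (UNIV, {N # S | N S. N \<in> fst (ty_sem d) \<and> sn N \<and> S \<in> snd (ty_sem k)} \<union>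
      (if fst (ty_sem d) = UNIV \<and> [] \<in> snd (ty_sem k) then {[]} else {}))"

abbreviation semT :: "ty \<Rightarrow> trm set" where "semT t \<equiv> fst (ty_sem t)"

abbreviation semK :: "ty \<Rightarrow> trm list set" where "semK t \<equiv> snd (ty_sem t)"

text \<open>A command \<open>[\<alpha>]N\<close> is interpreted through the pair of its body and the stack of \<open>\<alpha>\<close>.\<close>

primrec semC :: "ty \<Rightarrow> (trm \<times> trm list) set" where
  "semC (Psi a) = UNIV"
| "semC Om = UNIV"
| "semC (Meet a b) = semC a \<inter> semC b"
| "semC (Arr k r) = UNIV"
| "semC (ty.Prod d k) = {(M, S). M \<in> semT d \<and> (S \<in> sn_args \<longrightarrow> S \<in> semK k)}"

lemma sn_args_ren: "S \<in> sn_args \<Longrightarrow> map (ren z) S \<in> sn_args"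
  by (auto simp: sn_args_def intro: sn_rename)

lemma sn_args_append[simp]: "S @ S' \<in> sn_args \<longleftrightarrow> S \<in> sn_args \<and> S' \<in> sn_args"
  by (auto simp: sn_args_def)

lemma sn_args_Cons[simp]: "N # S \<in> sn_args \<longleftrightarrow> sn N \<and> S \<in> sn_args"
  by (auto simp: sn_args_def)

lemma sn_args_Nil[simp]: "[] \<in> sn_args"
  by (auto simp: sn_args_def)

lemma semK_sn_args: "semK t \<subseteq> sn_args"
  by (induction t) auto

lemma semK_append: "S \<in> semK t \<Longrightarrow> S' \<in> sn_args \<Longrightarrow> S @ S' \<in> semK t"
proof (induction t arbitrary: S S')
  case (Prod d k)
  show ?case
  proof (cases S)
    case Nil
    then have u: "semT d = UNIV" and e: "[] \<in> semK k" using Prod.prems(1) by (auto split: if_splits)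
    show ?thesis
    proof (cases S')
      case Nil then show ?thesis using \<open>S = []\<close> Prod.prems by simp
    next
      case (Cons N S'')
      then have "S'' \<in> semK k" using Prod.IH(2)[OF e, of S''] Prod.prems(2) by simp
      then show ?thesis using Cons \<open>S = []\<close> u Prod.prems(2) by auto
    qed
  next
    case (Cons N S0)
    then show ?thesis using Prod.prems Prod.IH(2)[of S0 S'] by (auto split: if_splits)
  qed
qed auto

lemma sem_ren_closed: "(M \<in> semT t \<longrightarrow> ren z M \<in> semT t) \<and> (S \<in> semK t \<longrightarrow> map (ren z) S \<in> semK t)"
proof (induction t arbitrary: M S z)
  case (Psi a)
  then show ?case by (cases a) (auto simp: sn_appl_def ren_ren)
next
  case Om
  then show ?case by (auto intro: sn_args_ren)
next
  case (Meet a b)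
  then show ?case by auto
next
  case (Arr k r)
  then show ?case by (auto simp: ren_ren)
next
  case (Prod d k)
  have "map (ren z) S \<in> semK (ty.Prod d k)" if "S \<in> semK (ty.Prod d k)"
  proof (cases S)
    case Nil then show ?thesis using that by simp
  next
    case (Cons N S0)
    then have h: "N \<in> semT d" "sn N" "S0 \<in> semK k" using that by (auto split: if_splits)
    have "ren z N \<in> semT d" using Prod.IH(1) h(1) by blast
    moreover have "sn (ren z N)" using h(2) by (rule sn_rename)
    moreover have "map (ren z) S0 \<in> semK k" using Prod.IH(2) h(3) by blast
    ultimately show ?thesis using Cons by simp
  qed
  then show ?case by simp
qed

lemma semT_ren: "M \<in> semT t \<Longrightarrow> ren z M \<in> semT t" using sem_ren_closed by blast

lemma semK_ren: "S \<in> semK t \<Longrightarrow> map (ren z) S \<in> semK t" using sem_ren_closed by blast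

lemma leqR_sem: "leqR a b \<Longrightarrow> semT a \<subseteq> semT b"
proof (induction rule: leqR.induct)
  case (R_join1 a b) then show ?case by (cases a; cases b) auto
next
  case (R_join2 a b) then show ?case by (cases a; cases b) auto
qed auto

lemma sn_appl_apps: assumes "M \<in> sn_appl" "S \<in> sn_args" shows "apps (ren z M) S \<in> sn_appl"
  unfolding sn_appl_def
proof (clarify)
  fix z' S' assume "S' \<in> sn_args"
  then have "map (ren z') S @ S' \<in> sn_args" using assms(2) sn_args_ren by simp
  moreover have "\<forall>z S. S \<in> sn_args \<longrightarrow> sn (apps (ren z M) S)"
    using assms(1) unfolding sn_appl_def by blast
  ultimately have "sn (apps (ren (\<lambda>a. z' (z a)) M) (map (ren z') S @ S'))" by blast
  then show "sn (apps (ren z' (apps (ren z M) S)) S')" by (simp add: ren_apps ren_ren)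
qed

lemma semT_Arr_Om_psi: "semT (Arr Om (Psi a)) = semT (Psi a)"
proof (cases a)
  case Top
  have "M \<in> sn_appl" if "\<forall>z S. S \<in> sn_args \<longrightarrow> apps (ren z M) S \<in> sn_appl" for M
    using that[rule_format, of "[]" id] by simp
  then show ?thesis using Top by (auto intro: sn_appl_apps)
qed simp

lemma semK_Prod_Om_Om: "semK (ty.Prod Om Om) = sn_args"
proof
  show "sn_args \<subseteq> semK (ty.Prod Om Om)"
  proof
    fix S assume "S \<in> sn_args"
    then show "S \<in> semK (ty.Prod Om Om)" by (cases S) auto
  qed
qed auto

lemma leq_sem: "leqD a b \<Longrightarrow> semT a \<subseteq> semT b" "leqC a b \<Longrightarrow> semK a \<subseteq> semK b \<and> semC a \<subseteq> semC b"
proof (induction rule: leqD_leqC.inducts)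
  case (D_R a b) then show ?case by (rule leqR_sem)
next
  case (D_arr k' k r r')
  then show ?case using leqR_sem[OF D_arr.hyps(2)] by auto
next
  case (D_psi1 a)
  show ?case unfolding semT_Arr_Om_psi ..
next
  case (D_psi2 a)
  show ?case unfolding semT_Arr_Om_psi ..
next
  case C_om
  have "semK Om \<subseteq> semK (ty.Prod Om Om)" unfolding semK_Prod_Om_Om by simp
  then show ?case by simp
next
  case (C_top a)
  then show ?case using semK_sn_args by auto
qed (auto split: if_splits)

lemma Var_semT_Arr_psi: "Var x \<in> semT (Arr k (Psi Top))"
proof (simp, intro allI impI)
  fix z S assume "S \<in> semK k"
  then have S: "S \<in> sn_args" using semK_sn_args by blast
  show "apps (Var x) S \<in> sn_appl" unfolding sn_appl_def
  proof clarify
    fix z' S' assume "S' \<in> sn_args"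
    then have "\<forall>N\<in>set (map (ren z') S @ S'). sn N" using S sn_args_ren unfolding sn_args_def by auto
    then have "sn (apps (Var x) (map (ren z') S @ S'))" by (rule sn_apps_Var)
    then show "sn (apps (ren z' (apps (Var x) S)) S')" by (simp add: ren_apps)
  qed
qed

lemma sn_apps_semT_Arr_psi:
  assumes "M \<in> semT (Arr k (Psi Top))" "S \<in> semK k" "S' \<in> sn_args"
  shows "sn (apps M (S @ S'))"
proof -
  have "\<forall>z S. S \<in> semK k \<longrightarrow> apps (ren z M) S \<in> sn_appl" using assms(1) by simp
  then have "apps (ren id M) S \<in> sn_appl" using assms(2) by blast
  then have "sn (apps (ren id (apps (ren id M) S)) S')"
    using assms(3) unfolding sn_appl_def by blast
  then show ?thesis by simp
qed

inductive_cases rD_ArrE: "rD (Arr k r)"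
inductive_cases rC_ArrE: "rC (Arr k r)"
inductive_cases rC_ProdE: "rC (ty.Prod d k)"

lemma restricted_sem:
  "rD d \<Longrightarrow> (\<forall>x. Var x \<in> semT d) \<and> (\<forall>M\<in>semT d. sn M)"
  "rC k \<Longrightarrow> \<exists>n. \<forall>xs. n \<le> length xs \<longrightarrow> map Var xs \<in> semK k"
proof (induction rule: rD_rC.inducts)
  case (1 k)
  then obtain n where "\<forall>xs. n \<le> length xs \<longrightarrow> map Var xs \<in> semK k" by blast
  from this[rule_format, of "replicate n 0"] have "map Var (replicate n 0) \<in> semK k" by simp
  then have "sn (apps M (map Var (replicate n 0)))" if "M \<in> semT (Arr k (Psi Top))" for M
    using sn_apps_semT_Arr_psi[OF that, of _ "[]"] by simp
  then show ?case using Var_semT_Arr_psi sn_appsD by blast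
next
  case (4 d k)
  then obtain n where n: "\<forall>xs. n \<le> length xs \<longrightarrow> map Var xs \<in> semK k" by blast
  have "map Var xs \<in> semK (ty.Prod d k)" if len: "Suc n \<le> length xs" for xs
  proof -
    obtain x xs' where "xs = x # xs'" "n \<le> length xs'" using len by (cases xs) auto
    then show ?thesis using n 4 by simp
  qed
  then show ?case by blast
next
  case (5 a b)
  then obtain n m where "\<forall>xs. n \<le> length xs \<longrightarrow> map Var xs \<in> semK a"
    and "\<forall>xs. m \<le> length xs \<longrightarrow> map Var xs \<in> semK b" by blast
  then have "\<forall>xs. max n m \<le> length xs \<longrightarrow> map Var xs \<in> semK (Meet a b)" by simp
  then show ?case by blast
qed (auto simp: sn_args_def)

definition Omega :: trm where
  "Omega = App (Lam (App (Var 0) (Var 0))) (Lam (App (Var 0) (Var 0)))"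

lemma not_sn_Omega: "\<not> sn Omega"
proof
  have r: "red Omega Omega"
    unfolding Omega_def using red_redc.beta[of "App (Var 0) (Var 0)" "Lam (App (Var 0) (Var 0))"]
    by simp
  have "sn X \<Longrightarrow> X \<noteq> Omega" for X
    by (induction rule: sn.induct) (use r in blast)
  then show "sn Omega \<Longrightarrow> False" by blast
qed

lemma semT_restricted_neq_UNIV: "rD d \<Longrightarrow> semT d \<noteq> UNIV"
  using restricted_sem(1) not_sn_Omega by blast

lemma rjudg_Arr: "rjudg G D (Arr k r) \<Longrightarrow> r = Psi Top \<and> rC k"
  unfolding rjudg_def by (auto elim: rD_ArrE rC_ArrE)

lemma rtyp_rjudg: "rtyp G M t D \<Longrightarrow> rjudg G D t"
  by (cases rule: rtyp.cases) auto

section \<open>Soundness of the restricted system\<close>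

definition valid_env :: "env \<Rightarrow> env \<Rightarrow> (nat \<Rightarrow> trm) \<Rightarrow> (nat \<Rightarrow> trm list) \<Rightarrow> bool" where
  "valid_env G D s t \<longleftrightarrow> (\<forall>x. s x \<in> semT (look G x)) \<and> (\<forall>a. t a \<in> semK (look D a))"

definition sem_typed :: "env \<Rightarrow> trm \<Rightarrow> ty \<Rightarrow> env \<Rightarrow> bool" where
  "sem_typed G M t D \<longleftrightarrow> (\<forall>s z u. valid_env G D s u \<longrightarrow> psubst M s z u \<in> semT t)"

primrec cmd_parts :: "cmd \<Rightarrow> (nat \<Rightarrow> trm) \<Rightarrow> (nat \<Rightarrow> nat) \<Rightarrow> (nat \<Rightarrow> trm list) \<Rightarrow> trm \<times> trm list" where
  "cmd_parts (Named a M) s z t = (psubst M s z t, t a)"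

definition sem_typedc :: "env \<Rightarrow> cmd \<Rightarrow> ty \<Rightarrow> env \<Rightarrow> bool" where
  "sem_typedc G C t D \<longleftrightarrow> (\<forall>s z u. valid_env G D s u \<longrightarrow> cmd_parts C s z u \<in> semC t)"

lemma look_dropE[simp]: "look (dropE E) x = look E (Suc x)"
  by (simp add: look_def dropE_def)

lemma valid_env_ren: "valid_env G D s t \<Longrightarrow> valid_env G D (\<lambda>i. ren z (s i)) (\<lambda>a. map (ren z) (t a))"
  by (simp add: valid_env_def semT_ren semK_ren)

lemma valid_env_scons:
  "valid_env (dropE G) D s t \<Longrightarrow> N \<in> semT (look G 0) \<Longrightarrow> valid_env G D (scons N s) t"
  unfolding valid_env_def by (auto simp: scons_def split: nat.split)

text \<open>Realizers of \<open>\<kappa> \<rightarrow> \<psi>\<close> must be closed under renaming; for a substitution instance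
  this comes for free, since renaming a valid substitution keeps it valid.\<close>

lemma sem_typed_Arr_psiI:
  assumes "\<And>s z u S S'. valid_env G D s u \<Longrightarrow> S \<in> semK k \<Longrightarrow> S' \<in> sn_args \<Longrightarrow>
    sn (apps (psubst M s z u) (S @ S'))"
  shows "sem_typed G M (Arr k (Psi Top)) D"
  unfolding sem_typed_def
proof (intro allI impI, simp, intro allI impI)
  fix s z u z' S assume v: "valid_env G D s u" and S: "S \<in> semK k"
  show "apps (ren z' (psubst M s z u)) S \<in> sn_appl" unfolding sn_appl_def
  proof clarify
    fix z'' :: "nat \<Rightarrow> nat" and S' assume S': "S' \<in> sn_args"
    let ?w = "\<lambda>a. z'' (z' a)"
    have "valid_env G D (\<lambda>i. ren ?w (s i)) (\<lambda>a. map (ren ?w) (u a))" using v by (rule valid_env_ren)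
    moreover have "map (ren z'') S \<in> semK k" using S by (rule semK_ren)
    ultimately have "sn (apps (psubst M (\<lambda>i. ren ?w (s i)) (\<lambda>a. ?w (z a)) (\<lambda>a. map (ren ?w) (u a)))
        (map (ren z'') S @ S'))"
      using assms S' by blast
    then show "sn (apps (ren z'' (apps (ren z' (psubst M s z u)) S)) S')"
      by (simp add: ren_apps ren_ren ren_psubst o_def)
  qed
qed

lemma sem_typed_Lam:
  assumes M: "sem_typed G M (Arr k (Psi Top)) D" and d: "rD (look G 0)"
  shows "sem_typed (dropE G) (Lam M) (Arr (ty.Prod (look G 0) k) (Psi Top)) D"
proof (rule sem_typed_Arr_psiI)
  fix s z u S S'
  assume v: "valid_env (dropE G) D s u"
    and S: "S \<in> semK (ty.Prod (look G 0) k)" and S': "S' \<in> sn_args"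
  have "semT (look G 0) \<noteq> UNIV" using d by (rule semT_restricted_neq_UNIV)
  then obtain N S1 where S1: "S = N # S1" "N \<in> semT (look G 0)" "sn N" "S1 \<in> semK k"
    using S by (cases S) (auto split: if_splits)
  have "psubst M (scons N s) z u \<in> semT (Arr k (Psi Top))"
    using M valid_env_scons[OF v S1(2)] unfolding sem_typed_def by blast
  then have "sn (apps (psubst M (scons N s) z u) (S1 @ S'))"
    using S1(4) S' by (rule sn_apps_semT_Arr_psi)
  then have "sn (apps (App (Lam (psubst M (up_var s) z (\<lambda>a. map (liftV 0) (u a)))) N) (S1 @ S'))"
    using S1(3) by (intro sn_beta_expand) (simp_all add: substV0_psubst_up)
  then show "sn (apps (psubst (Lam M) s z u) (S @ S'))" using S1(1) by simp
qed

text \<open>Under \<open>\<mu>\<close> the stack \<open>S @ S'\<close> is pushed onto the commands on the bound name, so the body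
  is checked against the environment that gives name \<open>0\<close> this stack.\<close>

lemma sem_typed_Mu:
  assumes C: "sem_typedc G C (ty.Prod (Arr k' (Psi Top)) k') D"
  shows "sem_typed G (Mu C) (Arr (look D 0) (Psi Top)) (dropE D)"
proof (rule sem_typed_Arr_psiI)
  fix s z u S S'
  assume v: "valid_env G (dropE D) s u" and S: "S \<in> semK (look D 0)" and S': "S' \<in> sn_args"
  define S2 where "S2 = S @ S'"
  have S2: "S2 \<in> semK (look D 0)" unfolding S2_def using semK_append S S' by blast
  define s2 where "s2 = (\<lambda>i. liftN 0 (s i))"
  define u2 where "u2 = (\<lambda>a. case a of 0 \<Rightarrow> map (liftN 0) S2 | Suc b \<Rightarrow> map (liftN 0) (u b))"
  have v2: "valid_env G D s2 u2"
    using v S2 unfolding valid_env_def s2_def u2_def liftN0_is_ren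
    by (auto simp: semT_ren semK_ren split: nat.split)
  obtain a M0 where C_eq: "C = Named a M0" by (cases C)
  have "cmd_parts C s2 (up_name z) u2 \<in> semC (ty.Prod (Arr k' (Psi Top)) k')"
    using C v2 unfolding sem_typedc_def by blast
  moreover have "u2 a \<in> sn_args" using v2 semK_sn_args unfolding valid_env_def by blast
  ultimately have "psubst M0 s2 (up_name z) u2 \<in> semT (Arr k' (Psi Top))" "u2 a \<in> semK k'"
    using C_eq by auto
  then have "sn (apps (psubst M0 s2 (up_name z) u2) (u2 a @ []))"
    by (intro sn_apps_semT_Arr_psi) simp_all
  then have "sn (Mu (psubstc C s2 (up_name z) u2))" using C_eq by (simp add: sn_Mu_Named)
  then have "sn (Mu (psubstc (psubstc C s2 (up_name z) (up_args u)) Var id (args0 S2)))"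
    unfolding s2_def u2_def psubst_args0_Mu_body .
  then have "sn (apps (Mu (psubstc C s2 (up_name z) (up_args u))) S2)"
    using S2 semK_sn_args by (intro sn_mu_expand) (auto simp: sn_args_def)
  then show "sn (apps (psubst (Mu C) s z u) (S @ S'))" unfolding S2_def s2_def by simp
qed

lemma sem_typed_App:
  assumes M: "sem_typed G M (Arr (ty.Prod d k) r) D" and N: "sem_typed G N d D" and d: "rD d"
  shows "sem_typed G (App M N) (Arr k r) D"
  unfolding sem_typed_def
proof (intro allI impI, simp, intro allI impI)
  fix s z u z' S assume v: "valid_env G D s u" and S: "S \<in> semK k"
  have "ren z' (psubst N s z u) \<in> semT d" using N v semT_ren unfolding sem_typed_def by blast
  moreover have "sn (ren z' (psubst N s z u))" using calculation restricted_sem(1)[OF d] by blast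
  ultimately have "ren z' (psubst N s z u) # S \<in> semK (ty.Prod d k)" using S by simp
  moreover have "\<forall>z' S. S \<in> semK (ty.Prod d k) \<longrightarrow> apps (ren z' (psubst M s z u)) S \<in> semT r"
    using M v unfolding sem_typed_def by simp
  ultimately have "apps (ren z' (psubst M s z u)) (ren z' (psubst N s z u) # S) \<in> semT r" by blast
  then show "apps (App (ren z' (psubst M s z u)) (ren z' (psubst N s z u))) S \<in> semT r" by simp
qed

lemma rtyp_sem_typed:
  "rtyp G M t D \<Longrightarrow> sem_typed G M t D"
  "rtypc G C t D \<Longrightarrow> sem_typedc G C t D"
proof (induction rule: rtyp_rtypc.inducts)
  case (Ax G x d D)
  then have "look G x = d" by (simp add: look_def)
  then show ?case by (auto simp: sem_typed_def valid_env_def)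
next
  case (Abs G M k r D)
  then have "r = Psi Top" "rC (ty.Prod (look G 0) k)"
    unfolding rjudg_def by (auto elim: rD_ArrE rC_ArrE)
  then show ?case using Abs.IH by (auto intro: sem_typed_Lam elim: rC_ProdE)
next
  case (App G M d k r D N)
  then have "rC (ty.Prod d k)" using rtyp_rjudg rjudg_Arr by blast
  then show ?case using App.IH by (auto intro: sem_typed_App elim: rC_ProdE)
next
  case (MuR G C k' r D)
  then show ?case using sem_typed_Mu rjudg_Arr by blast
next
  case (SubT G M s t D)
  then show ?case using leq_sem(1) unfolding sem_typed_def by blast
next
  case (SubC G C s t D)
  then show ?case using leq_sem(2) unfolding sem_typedc_def by blast
qed (auto simp: sem_typed_def sem_typedc_def valid_env_def)

lemma valid_env_Var:
  assumes "rbasis G" and "rctxt D"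
  obtains u where "valid_env G D Var u"
proof -
  have "Var x \<in> semT (look G x)" for x
  proof (cases "G x")
    case (Some t)
    then have "t \<in> ran G" by (rule ranI)
    then have "rD t" using assms(1) unfolding rbasis_def by blast
    then show ?thesis using restricted_sem(1) Some unfolding look_def by simp
  qed (simp add: look_def)
  moreover have "\<exists>S. S \<in> semK (look D a)" for a
  proof -
    have "rC (look D a)"
    proof (cases "D a")
      case (Some t)
      then have "t \<in> ran D" by (rule ranI)
      then show ?thesis using assms(2) Some unfolding rctxt_def look_def by simp
    qed (simp add: look_def rD_rC.intros(3))
    then obtain n where "\<forall>xs. n \<le> length xs \<longrightarrow> map Var xs \<in> semK (look D a)"
      using restricted_sem(2) by blast
    from this[rule_format, of "replicate n 0"] show ?thesis by auto
  qed
  then obtain u where "\<forall>a. u a \<in> semK (look D a)" by metis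
  ultimately show ?thesis using that unfolding valid_env_def by blast
qed

theorem theorem6p15:
  assumes "rbasis G" and "rctxt D" and "rD d" and "rtyp G M d D"
  shows "SN M"
proof -
  obtain u where "valid_env G D Var u" using assms(1,2) by (rule valid_env_Var)
  then have "psubst M Var id u \<in> semT d"
    using rtyp_sem_typed(1)[OF assms(4)] unfolding sem_typed_def by blast
  then have "sn (psubst M Var id u)" using restricted_sem(1)[OF assms(3)] by blast
  then show ?thesis by (rule sn_imp_SN[OF sn_psubstD])
qed

end
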